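(* Let $\Omega\subset\mathbb{R}^N$ be a bounded domain with Lipschitz boundary, let $1<q<p$ with $N<p$. Assume: (H1) $g:\mathbb{R}\to[a_0,+\infty)$ is continuous, with $a_0>0$; (H2) $f:\Omega\times\mathbb{R}\times\mathbb{R}^N\to\mathbb{R}$ is a Carath\'eodory function and there exist a nonnegative $\sigma\in L^{r_1}(\Omega)$, constants $b,c\ge 0$ and $r_1,r_2\ge1$ with $|f(x,s,\xi)|\le\sigma(x)+b|s|^{r_2}+c|\xi|^{p-1}$ for a.e. $x\in\Omega$ and all $s\in\mathbb{R}$, $\xi\in\mathbb{R}^N$; (H3) there exist constants $c_0<a_0$, $c_1>0$ and $\alpha\in[1,p)$ with $f(x,s,\xi)s\le c_0|\xi|^p+c_1(|s|^\alpha+1)$ for a.e. $x\in\Omega$ and all $s\in\mathbb{R}$, $\xi\in\mathbb{R}^N$. Then there exist constants $R,R_1>0$ such that every weak solution $u\in W_0^{1,p}(\Omega)$ of $$-\operatorname{div}\big(g(u)|\nabla u|^{p-2}\nabla u\big)+\operatorname{div}\big(|\nabla u|^{q-2}\nabla u\big)=f(x,u,\nabla u)\ \text{in }\Omega,\qquad u=0\ \text{on }\partial\Omega$$ satisfies $\|u\|_{W_0^{1,p}(\Omega)}\le R_1$ and $\|u\|_{C(\overline\Omega)}\le R$.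
   Context: $W_0^{1,p}(\Omega)$ carries the norm $\|\nabla\cdot\|_{L^p(\Omega)}$; since $p>N$ it embeds continuously in $C(\overline\Omega)$. A weak solution is $u\in W_0^{1,p}(\Omega)$ such that for all $v\in W_0^{1,p}(\Omega)$: $$\int_\Omega g(u)|\nabla u|^{p-2}\nabla u\cdot\nabla v\,dx-\int_\Omega|\nabla u|^{q-2}\nabla u\cdot\nabla v\,dx=\int_\Omega f(x,u,\nabla u)v\,dx.$$ *)

theory Defs
  imports "HOL-Analysis.Analysis"
begin

text \<open>Omega is locally (near each boundary point) the strict epigraph of a Lipschitz
 function defined on the hyperplane orthogonal to some unit direction e.\<close>
definition lipschitz_boundary :: "'a::euclidean_space set \<Rightarrow> bool" where
  "lipschitz_boundary \<Omega> \<longleftrightarrow>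
     (\<forall>x0\<in>frontier \<Omega>. \<exists>r>0. \<exists>e. norm e = 1 \<and> (\<exists>\<gamma> L.
        (\<forall>y z. y \<bullet> e = 0 \<longrightarrow> z \<bullet> e = 0 \<longrightarrow> \<bar>\<gamma> y - \<gamma> z\<bar> \<le> L * norm (y - z)) \<and>
        \<Omega> \<inter> ball x0 r = {x \<in> ball x0 r. \<gamma> (x - (x \<bullet> e) *\<^sub>R e) < x \<bullet> e}))"

definition bounded_lipschitz_domain :: "'a::euclidean_space set \<Rightarrow> bool" where
  "bounded_lipschitz_domain \<Omega> \<longleftrightarrow>
     open \<Omega> \<and> connected \<Omega> \<and> \<Omega> \<noteq> {} \<and> bounded \<Omega> \<and> lipschitz_boundary \<Omega>"

fun dderiv :: "'a::euclidean_space list \<Rightarrow> ('a \<Rightarrow> real) \<Rightarrow> 'a \<Rightarrow> real" where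
  "dderiv [] \<phi> = \<phi>"
| "dderiv (v # vs) \<phi> = (\<lambda>x. frechet_derivative (dderiv vs \<phi>) (at x) v)"

definition smooth_fun :: "('a::euclidean_space \<Rightarrow> real) \<Rightarrow> bool" where
  "smooth_fun \<phi> \<longleftrightarrow> (\<forall>vs x. dderiv vs \<phi> differentiable (at x))"

definition test_fun :: "'a::euclidean_space set \<Rightarrow> ('a \<Rightarrow> real) \<Rightarrow> bool" where
  "test_fun \<Omega> \<phi> \<longleftrightarrow> smooth_fun \<phi> \<and> compact (closure {x. \<phi> x \<noteq> 0})
      \<and> closure {x. \<phi> x \<noteq> 0} \<subseteq> \<Omega>"

definition grad :: "('a::euclidean_space \<Rightarrow> real) \<Rightarrow> 'a \<Rightarrow> 'a" where
  "grad \<phi> x = (\<Sum>i\<in>Basis. frechet_derivative \<phi> (at x) i *\<^sub>R i)"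

text \<open>W01p Omega p u Du: u belongs to W_0^{1,p}(Omega) (closure of C_c^infinity(Omega)
  in the W^{1,p} norm) and Du is its weak gradient.\<close>
definition W01p :: "'a::euclidean_space set \<Rightarrow> real \<Rightarrow> ('a \<Rightarrow> real) \<Rightarrow> ('a \<Rightarrow> 'a) \<Rightarrow> bool" where
  "W01p \<Omega> p u Du \<longleftrightarrow>
     u \<in> borel_measurable lebesgue \<and> Du \<in> borel_measurable lebesgue \<and>
     set_integrable lebesgue \<Omega> (\<lambda>x. \<bar>u x\<bar> powr p) \<and>
     set_integrable lebesgue \<Omega> (\<lambda>x. norm (Du x) powr p) \<and>
     (\<exists>\<phi>. (\<forall>k. test_fun \<Omega> (\<phi> k)) \<and>
        (\<lambda>k. LINT x:\<Omega>|lebesgue. \<bar>\<phi> k x - u x\<bar> powr p) \<longlonglongrightarrow> 0 \<and>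
        (\<lambda>k. LINT x:\<Omega>|lebesgue. norm (grad (\<phi> k) x - Du x) powr p) \<longlonglongrightarrow> 0)"

definition W01p_norm :: "'a::euclidean_space set \<Rightarrow> real \<Rightarrow> ('a \<Rightarrow> 'a) \<Rightarrow> real" where
  "W01p_norm \<Omega> p Du = (LINT x:\<Omega>|lebesgue. norm (Du x) powr p) powr (1 / p)"

definition weak_solution ::
  "'a::euclidean_space set \<Rightarrow> real \<Rightarrow> real \<Rightarrow> (real \<Rightarrow> real) \<Rightarrow> ('a \<Rightarrow> real \<Rightarrow> 'a \<Rightarrow> real)
    \<Rightarrow> ('a \<Rightarrow> real) \<Rightarrow> ('a \<Rightarrow> 'a) \<Rightarrow> bool" where
  "weak_solution \<Omega> p q g f u Du \<longleftrightarrow> W01p \<Omega> p u Du \<and>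
     (\<forall>v Dv. W01p \<Omega> p v Dv \<longrightarrow>
        (LINT x:\<Omega>|lebesgue. g (u x) * norm (Du x) powr (p - 2) * (Du x \<bullet> Dv x))
        - (LINT x:\<Omega>|lebesgue. norm (Du x) powr (q - 2) * (Du x \<bullet> Dv x))
        = (LINT x:\<Omega>|lebesgue. f x (u x) (Du x) * v x))"

definition caratheodory ::
  "'a::euclidean_space set \<Rightarrow> ('a \<Rightarrow> real \<Rightarrow> 'a \<Rightarrow> real) \<Rightarrow> bool" where
  "caratheodory \<Omega> f \<longleftrightarrow>
     (\<forall>s \<xi>. (\<lambda>x. f x s \<xi>) \<in> borel_measurable (restrict_space lebesgue \<Omega>)) \<and>
     (AE x in lebesgue. x \<in> \<Omega> \<longrightarrow> continuous_on UNIV (\<lambda>(s, \<xi>). f x s \<xi>))"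

end

theory Submission
  imports Defs
begin

text \<open>
  Testing the equation with u itself and using g \<ge> a0 together with (H3) gives
  a0 X \<le> \<integral>|Du|^q + c0 X + c1 (sup |u|^\<alpha> + 1) |\<Omega>|  with  X = \<integral>|Du|^p,
  and Young's inequality absorbs the q-term into X. Since p > N, Morrey's inequality bounds
  sup |u| by K (X + 1)^(1/p), so X + 1 is dominated by a constant plus a multiple of
  (X + 1)^(\<alpha>/p) with \<alpha>/p < 1; this bounds X and then sup |u|.

  Morrey's inequality is first proved for test functions: average the fundamental theorem of
  calculus along the segments from x to a unit ball on which the function vanishes, and split
  |grad \<phi>| by Young's inequality with weight \<mu> t^(-N/p) instead of using H\<ouml>lder. It passes to
  W_0^{1,p} along an a.e. convergent subsequence of approximating test functions.
\<close>

lemma weighted_young_le: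
  fixes G w p :: real
  assumes G: "G \<ge> 0" and w: "w > 0" and p: "p > 1"
  shows "G \<le> w powr (1 - p) * G powr p + w"
proof (cases "G \<le> w")
  case True
  then show ?thesis by (smt (verit) powr_ge_zero mult_nonneg_nonneg)
next
  case False
  then have G_pos: "G > 0" using w by simp
  have "1 \<le> (G / w) powr (p - 1)"
    using False w p by (intro ge_one_powr_ge_zero) auto
  also have "(G / w) powr (p - 1) = w powr (1 - p) * G powr (p - 1)"
    using G_pos w by (simp add: powr_divide powr_minus_divide[symmetric] divide_powr_uminus powr_minus field_simps)
  finally have "G \<le> G * (w powr (1 - p) * G powr (p - 1))"
    using G_pos mult_left_mono[of 1 _ G] by simp
  also have "\<dots> = w powr (1 - p) * G powr p"
    using G_pos by (simp add: powr_diff field_simps)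
  finally show ?thesis using w by simp
qed

lemma powr_le_eps_mult_powr:
  fixes a b \<eta> t :: real
  assumes a: "0 < a" and ab: "a < b" and \<eta>: "\<eta> > 0" and t: "t \<ge> 0"
  shows "t powr a \<le> \<eta> * t powr b + \<eta> powr (- a / (b - a))"
proof (cases "\<eta> * t powr (b - a) \<ge> 1")
  case True
  have "t powr a \<le> \<eta> * t powr (b - a) * t powr a"
    using True by (simp add: mult_le_cancel_right1)
  also have "\<dots> = \<eta> * t powr b"
    by (simp add: mult.assoc flip: powr_add)
  finally show ?thesis by (smt (verit) powr_ge_zero)
next
  case False
  then have "t powr (b - a) < 1 / \<eta>" using \<eta> by (simp add: field_simps)
  then have "(t powr (b - a)) powr (a / (b - a)) < (1 / \<eta>) powr (a / (b - a))"
    using a ab by (intro powr_less_mono2) auto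
  also have "(t powr (b - a)) powr (a / (b - a)) = t powr a"
    using ab by (simp add: powr_powr)
  also have "(1 / \<eta>) powr (a / (b - a)) = \<eta> powr (- a / (b - a))"
    using \<eta> by (simp add: powr_divide powr_minus_divide)
  finally show ?thesis using \<eta> by (smt (verit) mult_nonneg_nonneg powr_ge_zero)
qed

lemma powr_add_le_two_powr:
  fixes a b p :: real
  assumes "a \<ge> 0" "b \<ge> 0" "p > 0"
  shows "(a + b) powr p \<le> 2 powr p * (a powr p + b powr p)"
proof -
  have "(a + b) powr p \<le> (2 * max a b) powr p"
    using assms by (intro powr_mono2) auto
  also have "\<dots> = 2 powr p * max a b powr p"
    using assms by (simp add: powr_mult)
  also have "max a b powr p \<le> a powr p + b powr p"
    by (cases "a \<le> b") (auto simp: max_def)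
  finally show ?thesis by simp
qed

lemma bounded_of_sublinear_growth:
  fixes \<delta> B0 B1 a :: real
  assumes \<delta>: "\<delta> > 0" and B0: "B0 \<ge> 0" and B1: "B1 \<ge> 0" and a: "0 < a" "a < 1"
  obtains T0 where "T0 > 0" "\<And>T. T \<ge> 0 \<Longrightarrow> \<delta> * T \<le> B0 + B1 * T powr a \<Longrightarrow> T \<le> T0"
proof
  define \<eta> where "\<eta> = \<delta> / (2 * (B1 + 1))"
  have \<eta>: "\<eta> > 0" unfolding \<eta>_def using \<delta> B1 by simp
  define T0 where "T0 = 2 * (B0 + B1 * \<eta> powr (- a / (1 - a)) + 1) / \<delta>"
  have "0 \<le> B1 * \<eta> powr (- a / (1 - a))" using B1 by simp
  then show "T0 > 0" unfolding T0_def using \<delta> B0 by simp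
  fix T :: real
  assume T: "T \<ge> 0" and growth: "\<delta> * T \<le> B0 + B1 * T powr a"
  have "B1 * \<eta> = (\<delta> / 2) * (B1 / (B1 + 1))" unfolding \<eta>_def using B1 by (simp add: field_simps)
  also have "\<dots> \<le> \<delta> / 2" using B1 \<delta> by (simp add: field_simps)
  finally have B1\<eta>: "B1 * \<eta> \<le> \<delta> / 2" .
  have "T powr a \<le> \<eta> * T + \<eta> powr (- a / (1 - a))"
    using powr_le_eps_mult_powr[OF a(1) a(2) \<eta> T] T by simp
  then have "B1 * T powr a \<le> B1 * (\<eta> * T + \<eta> powr (- a / (1 - a)))"
    using B1 by (rule mult_left_mono)
  also have "\<dots> = (B1 * \<eta>) * T + B1 * \<eta> powr (- a / (1 - a))"
    by (simp add: algebra_simps)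
  also have "\<dots> \<le> (\<delta> / 2) * T + B1 * \<eta> powr (- a / (1 - a))"
    using mult_right_mono[OF B1\<eta> T] by simp
  finally have "(\<delta> / 2) * T \<le> B0 + B1 * \<eta> powr (- a / (1 - a))" using growth by linarith
  then show "T \<le> T0" unfolding T0_def using \<delta> by (simp add: field_simps)
qed

lemma test_fun_has_derivative:
  assumes "test_fun \<Omega> \<phi>"
  shows "(\<phi> has_derivative frechet_derivative \<phi> (at x)) (at x)"
proof -
  have "dderiv [] \<phi> differentiable (at x)"
    using assms unfolding test_fun_def smooth_fun_def by blast
  then show ?thesis by (simp add: frechet_derivative_works[symmetric])
qed

lemma continuous_on_test_fun: "test_fun \<Omega> \<phi> \<Longrightarrow> continuous_on UNIV \<phi>"
  by (meson continuous_at_imp_continuous_on has_derivative_continuous test_fun_has_derivative)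

lemma continuous_on_grad:
  assumes "test_fun \<Omega> \<phi>"
  shows "continuous_on UNIV (grad \<phi>)"
proof -
  from assms have "dderiv [v] \<phi> differentiable (at x)" for v x
    unfolding test_fun_def smooth_fun_def by blast
  then have "(\<lambda>x. frechet_derivative \<phi> (at x) v) differentiable (at x)" for v x
    by simp
  then have "continuous_on UNIV (\<lambda>x. frechet_derivative \<phi> (at x) v)" for v
    by (meson continuous_at_imp_continuous_on differentiable_imp_continuous_within)
  then show ?thesis
    unfolding grad_def[abs_def] by (intro continuous_on_sum continuous_on_scaleR continuous_on_const) auto
qed

lemma grad_inner:
  assumes "test_fun \<Omega> \<phi>"
  shows "grad \<phi> x \<bullet> v = frechet_derivative \<phi> (at x) v"
proof -
  let ?L = "frechet_derivative \<phi> (at x)"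
  have lin: "linear ?L" using test_fun_has_derivative[OF assms] has_derivative_linear by blast
  have "?L v = ?L (\<Sum>i\<in>Basis. (v \<bullet> i) *\<^sub>R i)" by (simp add: euclidean_representation)
  also have "\<dots> = (\<Sum>i\<in>Basis. (v \<bullet> i) * ?L i)"
    using lin by (simp add: linear_sum linear_scale)
  also have "\<dots> = grad \<phi> x \<bullet> v"
    unfolding grad_def inner_sum_left by (rule sum.cong) (simp_all add: inner_commute mult.commute)
  finally show ?thesis by simp
qed

lemma test_fun_eq_0_outside_support:
  assumes "test_fun \<Omega> \<phi>" "x \<notin> closure {x. \<phi> x \<noteq> 0}"
  shows "\<phi> x = 0" "grad \<phi> x = 0"
proof -
  let ?S = "- closure {x. \<phi> x \<noteq> 0}"
  have vanish: "\<phi> z = 0" if "z \<in> ?S" for z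
  proof -
    have "z \<notin> {x. \<phi> x \<noteq> 0}" by (rule contra_subsetD[OF closure_subset]) (use that in simp)
    then show ?thesis by simp
  qed
  show "\<phi> x = 0" by (rule vanish) (use assms(2) in simp)
  have S: "open ?S" "x \<in> ?S" using assms(2) by auto
  have "(\<phi> has_derivative (\<lambda>_. 0)) (at x)"
    using has_derivative_const S by (rule has_derivative_transform_within_open) (erule vanish[symmetric])
  then have "frechet_derivative \<phi> (at x) = (\<lambda>_. 0)"
    by (rule frechet_derivative_at[symmetric])
  then show "grad \<phi> x = 0" unfolding grad_def by simp
qed

lemma test_fun_eq_0_outside:
  assumes "test_fun \<Omega> \<phi>" "x \<notin> \<Omega>"
  shows "\<phi> x = 0" "grad \<phi> x = 0"
proof -
  have "x \<notin> closure {x. \<phi> x \<noteq> 0}" using assms unfolding test_fun_def by blast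
  then show "\<phi> x = 0" "grad \<phi> x = 0"
    by (rule test_fun_eq_0_outside_support[OF assms(1)])+
qed

lemma bounded_range_if_vanishes_outside_compact:
  fixes h :: "'a::topological_space \<Rightarrow> 'b::real_normed_vector"
  assumes "compact K" "continuous_on UNIV h" "\<And>x. x \<notin> K \<Longrightarrow> h x = 0"
  shows "bounded (range h)"
proof -
  have "range h \<subseteq> insert 0 (h ` K)" using assms(3) by auto
  moreover have "bounded (h ` K)"
    using assms(1,2) by (intro compact_imp_bounded compact_continuous_image) (auto intro: continuous_on_subset)
  then have "bounded (insert 0 (h ` K))" by simp
  ultimately show ?thesis by (rule bounded_subset[rotated])
qed

lemma
  assumes "test_fun \<Omega> \<phi>"
  shows bounded_range_test_fun: "bounded (range \<phi>)"
    and bounded_range_grad: "bounded (range (grad \<phi>))"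
proof -
  have K: "compact (closure {x. \<phi> x \<noteq> 0})" using assms unfolding test_fun_def by blast
  show "bounded (range \<phi>)"
    by (rule bounded_range_if_vanishes_outside_compact[OF K continuous_on_test_fun[OF assms]])
      (rule test_fun_eq_0_outside_support(1)[OF assms])
  show "bounded (range (grad \<phi>))"
    by (rule bounded_range_if_vanishes_outside_compact[OF K continuous_on_grad[OF assms]])
      (rule test_fun_eq_0_outside_support(2)[OF assms])
qed

section \<open>Morrey's inequality\<close>

lemma nn_integral_dilation:
  fixes f :: "'a::euclidean_space \<Rightarrow> ennreal" and x :: 'a and t :: real
  assumes f[measurable]: "f \<in> borel_measurable borel" and t: "t > 0"
  shows "(\<integral>\<^sup>+y. f (x + t *\<^sub>R (y - x)) \<partial>lborel)
    = ennreal (t powr - real DIM('a)) * (\<integral>\<^sup>+z. f z \<partial>lborel)"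
proof -
  have affine: "(1 - t) *\<^sub>R x + t *\<^sub>R y = x + t *\<^sub>R (y - x)" for y
    by (simp add: algebra_simps)
  have "(\<integral>\<^sup>+z. f z \<partial>lborel)
      = (\<integral>\<^sup>+z. f z \<partial>density (distr lborel borel (\<lambda>y. (1 - t) *\<^sub>R x + t *\<^sub>R y)) (\<lambda>_. \<bar>t\<bar>^DIM('a)))"
    using lborel_affine[of t "(1 - t) *\<^sub>R x"] t by simp
  also have "\<dots> = ennreal (t ^ DIM('a)) * (\<integral>\<^sup>+y. f (x + t *\<^sub>R (y - x)) \<partial>lborel)"
    using t by (simp add: nn_integral_density nn_integral_distr affine nn_integral_cmult)
  finally have *: "(\<integral>\<^sup>+z. f z \<partial>lborel) = ennreal (t ^ DIM('a)) * (\<integral>\<^sup>+y. f (x + t *\<^sub>R (y - x)) \<partial>lborel)" .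
  have "t powr - real DIM('a) * t ^ DIM('a) = 1"
    using t by (simp add: powr_minus powr_realpow[symmetric] field_simps)
  then have "ennreal (t powr - real DIM('a)) * ennreal (t ^ DIM('a)) = 1"
    using t by (simp flip: ennreal_mult)
  then show ?thesis unfolding * mult.assoc[symmetric] by simp
qed

lemma abs_diff_le_segment_grad:
  assumes tf: "test_fun \<Omega> \<phi>"
  shows "ennreal \<bar>\<phi> y - \<phi> x\<bar>
    \<le> (\<integral>\<^sup>+t. ennreal (norm (grad \<phi> (x + t *\<^sub>R (y - x))) * norm (y - x)) * indicator {0<..1} t \<partial>lborel)"
proof -
  let ?h' = "\<lambda>t. grad \<phi> (x + t *\<^sub>R (y - x)) \<bullet> (y - x)"
  let ?k = "\<lambda>t. norm (grad \<phi> (x + t *\<^sub>R (y - x))) * norm (y - x)"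
  have "((\<lambda>t. \<phi> (x + t *\<^sub>R (y - x))) has_vector_derivative ?h' t) (at t)" for t
  proof -
    have "((\<lambda>t. x + t *\<^sub>R (y - x)) has_derivative (\<lambda>s. s *\<^sub>R (y - x))) (at t)"
      by (auto intro!: derivative_eq_intros)
    from diff_chain_at[OF this test_fun_has_derivative[OF tf]] show ?thesis
      by (simp add: o_def has_vector_derivative_def grad_inner[OF tf, symmetric])
  qed
  then have "(?h' has_integral (\<phi> (x + 1 *\<^sub>R (y - x)) - \<phi> (x + 0 *\<^sub>R (y - x)))) {0..1}"
    by (intro fundamental_theorem_of_calculus) (auto intro: has_vector_derivative_at_within)
  then have ftc: "(?h' has_integral (\<phi> y - \<phi> x)) {0..1}" by simp
  have "continuous_on UNIV (\<lambda>t. grad \<phi> (x + t *\<^sub>R (y - x)))"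
    by (rule continuous_on_compose2[OF continuous_on_grad[OF tf]]) (auto intro!: continuous_intros)
  then have "continuous_on {0..1} ?k"
    by (intro continuous_on_mult_right continuous_on_norm) (auto elim: continuous_on_subset)
  then have k: "?k integrable_on {0..1}"
    by (rule integrable_continuous_interval)
  have "\<bar>\<phi> y - \<phi> x\<bar> = norm (integral {0..1} ?h')"
    using integral_unique[OF ftc] by simp
  also have "\<dots> \<le> integral {0..1} ?k"
    by (rule integral_norm_bound_integral[OF has_integral_integrable[OF ftc] k])
      (simp add: Cauchy_Schwarz_ineq2)
  finally have le: "\<bar>\<phi> y - \<phi> x\<bar> \<le> integral {0..1} ?k" .
  have "(\<integral>\<^sup>+t. ennreal (?k t) * indicator {0<..1} t \<partial>lborel)
      = (\<integral>\<^sup>+t. ennreal (?k t) * indicator {0..1} t \<partial>lborel)"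
    by (rule nn_integral_cong_AE)
      (use AE_lborel_singleton[of 0] in \<open>auto elim!: eventually_mono simp: indicator_def\<close>)
  also have "\<dots> = ennreal (integral {0..1} ?k)"
    by (rule nn_integral_has_integral_lebesgue'[OF _ integrable_integral[OF k]]) simp
  finally show ?thesis using le by (simp add: ennreal_leI)
qed

lemma nn_integral_powr_neg_01:
  fixes s :: real
  assumes "0 < s" "s < 1"
  shows "(\<integral>\<^sup>+t. ennreal (t powr (- s)) * indicator {0<..1} t \<partial>lborel) = ennreal (1 / (1 - s))"
proof -
  have "(\<integral>\<^sup>+t. ennreal (t powr (- s)) * indicator {0<..1} t \<partial>lborel)
      = (\<integral>\<^sup>+t. ennreal (t powr (- s)) * indicator {0..1} t \<partial>lborel)"
    by (rule nn_integral_cong_AE)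
      (use AE_lborel_singleton[of 0] in \<open>auto elim!: eventually_mono simp: indicator_def\<close>)
  also have "\<dots> = ennreal (1 powr (- s + 1) / (- s + 1))"
    by (rule nn_integral_has_integral_lebesgue'[OF _ has_integral_powr_from_0]) (use assms in auto)
  finally show ?thesis by simp
qed

text \<open>For s = N/p the weight \<mu> t^(-s) is balanced against the Jacobian t^(-N) of the dilation
  y \<mapsto> x + t (y - x): both terms become integrable multiples of t^(-s) on (0,1].\<close>

lemma abs_test_fun_le_young_segment:
  fixes \<phi> :: "'a::euclidean_space \<Rightarrow> real"
  assumes tf: "test_fun \<Omega> \<phi>" and y: "\<phi> y = 0" and D: "norm (y - x) \<le> D"
    and \<mu>: "\<mu> > 0" and p: "p > 1"
  shows "ennreal \<bar>\<phi> x\<bar>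
    \<le> (\<integral>\<^sup>+t. ennreal (D * \<mu> powr (1 - p) * t powr (s * (p - 1))
            * norm (grad \<phi> (x + t *\<^sub>R (y - x))) powr p) * indicator {0<..1} t \<partial>lborel)
      + (\<integral>\<^sup>+t. ennreal (D * \<mu> * t powr (- s)) * indicator {0<..1} t \<partial>lborel)"
proof -
  have D0: "D \<ge> 0" using D norm_ge_zero[of "y - x"] by linarith
  have [measurable]: "grad \<phi> \<in> borel_measurable borel"
    by (rule borel_measurable_continuous_onI[OF continuous_on_grad[OF tf]])
  define G where "G t = norm (grad \<phi> (x + t *\<^sub>R (y - x)))" for t
  have young: "G t * norm (y - x)
      \<le> D * \<mu> powr (1 - p) * t powr (s * (p - 1)) * G t powr p + D * \<mu> * t powr (- s)"
    if t: "t > 0" for t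
  proof -
    have w: "\<mu> * t powr (- s) > 0" using \<mu> t by simp
    have G0: "G t \<ge> 0" unfolding G_def by simp
    have "G t * norm (y - x) \<le> D * G t"
      using mult_left_mono[OF D G0] by (simp add: mult.commute)
    also have "\<dots> \<le> D * ((\<mu> * t powr (- s)) powr (1 - p) * G t powr p + \<mu> * t powr (- s))"
      using weighted_young_le[OF G0 w p] D0 by (rule mult_left_mono)
    also have "(\<mu> * t powr (- s)) powr (1 - p) = \<mu> powr (1 - p) * t powr (s * (p - 1))"
      using \<mu> t by (simp add: powr_mult powr_powr algebra_simps)
    finally show ?thesis by (simp add: algebra_simps)
  qed
  have "ennreal \<bar>\<phi> x\<bar> = ennreal \<bar>\<phi> y - \<phi> x\<bar>" using y by simp
  also have "\<dots> \<le> (\<integral>\<^sup>+t. ennreal (G t * norm (y - x)) * indicator {0<..1} t \<partial>lborel)"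
    unfolding G_def by (rule abs_diff_le_segment_grad[OF tf])
  also have "\<dots> \<le> (\<integral>\<^sup>+t. ennreal (D * \<mu> powr (1 - p) * t powr (s * (p - 1)) * G t powr p)
        * indicator {0<..1} t + ennreal (D * \<mu> * t powr (- s)) * indicator {0<..1} t \<partial>lborel)"
  proof (rule nn_integral_mono)
    fix t :: real
    show "ennreal (G t * norm (y - x)) * indicator {0<..1} t
      \<le> ennreal (D * \<mu> powr (1 - p) * t powr (s * (p - 1)) * G t powr p) * indicator {0<..1} t
        + ennreal (D * \<mu> * t powr (- s)) * indicator {0<..1} t"
      using young[of t] D0 \<mu> by (auto simp: indicator_def simp flip: ennreal_plus intro!: ennreal_leI)
  qed
  also have "\<dots> = (\<integral>\<^sup>+t. ennreal (D * \<mu> powr (1 - p) * t powr (s * (p - 1)) * G t powr p)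
        * indicator {0<..1} t \<partial>lborel) + (\<integral>\<^sup>+t. ennreal (D * \<mu> * t powr (- s)) * indicator {0<..1} t \<partial>lborel)"
    unfolding G_def by (rule nn_integral_add) measurable
  finally show ?thesis unfolding G_def .
qed

lemma nn_integral_segment_dilation_le:
  fixes h :: "'a::euclidean_space \<Rightarrow> real"
  assumes h[measurable]: "h \<in> borel_measurable borel"
    and Y: "(\<integral>\<^sup>+z. ennreal (h z) \<partial>lborel) \<le> ennreal Y" "Y \<ge> 0"
    and s: "0 < s" "s < 1" "s * p = real DIM('a)" and C: "C \<ge> 0"
  shows "(\<integral>\<^sup>+y. (\<integral>\<^sup>+t. ennreal (C * t powr (s * (p - 1)) * h (x + t *\<^sub>R (y - x)))
            * indicator {0<..1} t \<partial>lborel) \<partial>lborel)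
    \<le> ennreal (C * Y / (1 - s))"
proof -
  have "(\<integral>\<^sup>+y. (\<integral>\<^sup>+t. ennreal (C * t powr (s * (p - 1)) * h (x + t *\<^sub>R (y - x)))
            * indicator {0<..1} t \<partial>lborel) \<partial>lborel)
      = (\<integral>\<^sup>+t. (\<integral>\<^sup>+y. ennreal (C * t powr (s * (p - 1)) * h (x + t *\<^sub>R (y - x)))
            * indicator {0<..1} t \<partial>lborel) \<partial>lborel)"
    by (rule lborel_pair.Fubini') measurable
  also have "\<dots> \<le> (\<integral>\<^sup>+t. ennreal (C * Y) * (ennreal (t powr (- s)) * indicator {0<..1} t) \<partial>lborel)"
  proof (rule nn_integral_mono)
    fix t :: real
    show "(\<integral>\<^sup>+y. ennreal (C * t powr (s * (p - 1)) * h (x + t *\<^sub>R (y - x))) * indicator {0<..1} t \<partial>lborel)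
      \<le> ennreal (C * Y) * (ennreal (t powr (- s)) * indicator {0<..1} t)"
    proof (cases "t \<in> {0<..1}")
      case True
      then have t: "t > 0" by simp
      have "t powr (s * (p - 1)) * t powr (- real DIM('a)) = t powr (- s)"
        using s(3) by (simp flip: powr_add) (simp add: algebra_simps)
      then have scale: "ennreal (C * t powr (s * (p - 1))) * ennreal (t powr - real DIM('a)) * ennreal Y
          = ennreal (C * Y) * ennreal (t powr (- s))"
        using C Y(2) by (simp add: mult.assoc mult.left_commute flip: ennreal_mult)
      have "(\<integral>\<^sup>+y. ennreal (C * t powr (s * (p - 1)) * h (x + t *\<^sub>R (y - x))) \<partial>lborel)
          = ennreal (C * t powr (s * (p - 1))) * (\<integral>\<^sup>+y. ennreal (h (x + t *\<^sub>R (y - x))) \<partial>lborel)"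
        using C by (simp add: ennreal_mult' nn_integral_cmult)
      also have "\<dots> = ennreal (C * t powr (s * (p - 1))) * ennreal (t powr - real DIM('a))
          * (\<integral>\<^sup>+z. ennreal (h z) \<partial>lborel)"
        using nn_integral_dilation[of "\<lambda>z. ennreal (h z)", OF _ t] by (simp add: mult.assoc)
      also have "\<dots> \<le> ennreal (C * Y) * ennreal (t powr (- s))"
        unfolding scale[symmetric] by (intro mult_left_mono Y(1)) simp
      finally show ?thesis using True by simp
    qed simp
  qed
  also have "\<dots> = ennreal (C * Y) * ennreal (1 / (1 - s))"
    using s by (simp add: nn_integral_cmult nn_integral_powr_neg_01)
  also have "\<dots> = ennreal (C * Y / (1 - s))"
    using C Y(2) s by (simp flip: ennreal_mult)
  finally show ?thesis .
qed

lemma abs_test_fun_le_morrey: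
  fixes \<phi> :: "'a::euclidean_space \<Rightarrow> real"
  assumes tf: "test_fun \<Omega> \<phi>" and pN: "real DIM('a) < p"
    and A: "A \<in> sets lborel" "emeasure lborel A = ennreal mA" "mA > 0"
    and A0: "\<And>y. y \<in> A \<Longrightarrow> \<phi> y = 0" and D: "\<And>y. y \<in> A \<Longrightarrow> norm (y - x) \<le> D"
    and Y: "(\<integral>\<^sup>+z. ennreal (norm (grad \<phi> z) powr p) \<partial>lborel) \<le> ennreal Y" "Y \<ge> 0"
    and \<mu>: "\<mu> > 0"
  shows "\<bar>\<phi> x\<bar> \<le> D / (1 - real DIM('a) / p) * (\<mu> powr (1 - p) * Y / mA + \<mu>)"
proof -
  define s where "s = real DIM('a) / p"
  have N: "real DIM('a) \<ge> 1" using DIM_positive[where 'a='a] by linarith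
  then have p: "p > 1" using pN by linarith
  then have s: "0 < s" "s < 1" "s * p = real DIM('a)"
    using N pN unfolding s_def by (auto simp: field_simps)
  obtain y0 where "y0 \<in> A" using A(2,3) by fastforce
  then have D0: "D \<ge> 0" using D[of y0] norm_ge_zero[of "y0 - x"] by linarith
  have [measurable]: "grad \<phi> \<in> borel_measurable borel"
    by (rule borel_measurable_continuous_onI[OF continuous_on_grad[OF tf]])
  define F where "F y = (\<integral>\<^sup>+t. ennreal (D * \<mu> powr (1 - p) * t powr (s * (p - 1))
      * norm (grad \<phi> (x + t *\<^sub>R (y - x))) powr p) * indicator {0<..1} t \<partial>lborel)" for y
  have F_meas[measurable]: "F \<in> borel_measurable lborel"
    unfolding F_def by measurable
  have F: "(\<integral>\<^sup>+y. F y \<partial>lborel) \<le> ennreal (D * \<mu> powr (1 - p) * Y / (1 - s))"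
    unfolding F_def using D0 s Y
    by (intro nn_integral_segment_dilation_le[where h="\<lambda>z. norm (grad \<phi> z) powr p", simplified]) auto
  have "(\<integral>\<^sup>+t. ennreal (D * \<mu> * t powr (- s)) * indicator {0<..1} t \<partial>lborel)
      = (\<integral>\<^sup>+t. ennreal (D * \<mu>) * (ennreal (t powr (- s)) * indicator {0<..1} t) \<partial>lborel)"
    using D0 \<mu> by (simp add: ennreal_mult' mult.assoc)
  also have "\<dots> = ennreal (D * \<mu> / (1 - s))"
    using s D0 \<mu> by (simp add: nn_integral_cmult nn_integral_powr_neg_01 flip: ennreal_mult)
  finally have segment: "ennreal \<bar>\<phi> x\<bar> \<le> F y + ennreal (D * \<mu> / (1 - s))" if "y \<in> A" for y
    using abs_test_fun_le_young_segment[OF tf A0[OF that] D[OF that] \<mu> p, of s]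
    unfolding F_def by simp
  have "ennreal (\<bar>\<phi> x\<bar> * mA) = (\<integral>\<^sup>+y. ennreal \<bar>\<phi> x\<bar> * indicator A y \<partial>lborel)"
    using A by (simp add: nn_integral_cmult_indicator ennreal_mult)
  also have "\<dots> \<le> (\<integral>\<^sup>+y. F y * indicator A y + ennreal (D * \<mu> / (1 - s)) * indicator A y \<partial>lborel)"
    by (intro nn_integral_mono) (simp add: segment indicator_def)
  also have "\<dots> = (\<integral>\<^sup>+y. F y * indicator A y \<partial>lborel) + ennreal (D * \<mu> / (1 - s)) * ennreal mA"
    using A by (simp add: nn_integral_add nn_integral_cmult_indicator)
  also have "(\<integral>\<^sup>+y. F y * indicator A y \<partial>lborel) \<le> (\<integral>\<^sup>+y. F y \<partial>lborel)"
    by (intro nn_integral_mono) (simp add: indicator_def)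
  also note F
  finally have "\<bar>\<phi> x\<bar> * mA \<le> D * \<mu> powr (1 - p) * Y / (1 - s) + D * \<mu> / (1 - s) * mA"
    using D0 \<mu> s Y(2) A(3) by (simp add: ennreal_le_iff flip: ennreal_mult ennreal_plus)
  also have "\<dots> = D / (1 - s) * (\<mu> powr (1 - p) * Y / mA + \<mu>) * mA"
    using A(3) s by (simp add: divide_simps distrib_left distrib_right)
  finally have "\<bar>\<phi> x\<bar> * mA \<le> D / (1 - s) * (\<mu> powr (1 - p) * Y / mA + \<mu>) * mA" .
  then show ?thesis unfolding s_def using A(3) by (simp only: mult_le_cancel_right_pos)
qed

lemma set_integral_nonneg:
  fixes f :: "'a \<Rightarrow> real"
  assumes "\<And>x. x \<in> A \<Longrightarrow> 0 \<le> f x"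
  shows "0 \<le> (LINT x:A|M. f x)"
  unfolding set_lebesgue_integral_def using assms
  by (intro integral_nonneg_AE AE_I2) (simp add: indicator_def)

lemma set_integrable_const_real:
  assumes "A \<in> fmeasurable M"
  shows "set_integrable M A (\<lambda>_. c :: real)"
  unfolding set_integrable_def using assms
  by (intro integrable_scaleR_left integrable_real_indicator) (auto simp: fmeasurable_def)

lemma set_integrable_norm_diff_powr:
  fixes f g :: "'a \<Rightarrow> 'b::euclidean_space"
  assumes \<Omega>: "\<Omega> \<in> fmeasurable M"
    and f[measurable]: "f \<in> borel_measurable M" and f_bdd: "bounded (range f)"
    and g[measurable]: "g \<in> borel_measurable M" and g_int: "set_integrable M \<Omega> (\<lambda>x. norm (g x) powr p)"
    and p: "p > 0"
  shows "set_integrable M \<Omega> (\<lambda>x. norm (f x - g x) powr p)"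
proof -
  have [measurable]: "\<Omega> \<in> sets M" using \<Omega> by (rule fmeasurableD)
  obtain B where B: "\<And>x. norm (f x) \<le> B" using f_bdd by (auto simp: bounded_iff)
  have B0: "B \<ge> 0" using B norm_ge_zero order_trans by blast
  have bound: "norm (f x - g x) powr p \<le> 2 powr p * (B powr p + norm (g x) powr p)" for x
  proof -
    have "norm (f x - g x) \<le> B + norm (g x)"
      using B[of x] norm_triangle_ineq4[of "f x" "g x"] by linarith
    then have "norm (f x - g x) powr p \<le> (B + norm (g x)) powr p"
      using p by (intro powr_mono2) auto
    also have "\<dots> \<le> 2 powr p * (B powr p + norm (g x) powr p)"
      using B0 p by (intro powr_add_le_two_powr) auto
    finally show ?thesis .
  qed
  show ?thesis
  proof (rule set_integrable_bound[where f="\<lambda>x. 2 powr p * (B powr p + norm (g x) powr p)"])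
    show "set_integrable M \<Omega> (\<lambda>x. 2 powr p * (B powr p + norm (g x) powr p))"
      using set_integrable_const_real[OF \<Omega>] g_int by (intro set_integrable_mult_right set_integral_add(1))
    show "set_borel_measurable M \<Omega> (\<lambda>x. norm (f x - g x) powr p)"
      unfolding set_borel_measurable_def by measurable
    show "AE x in M. x \<in> \<Omega> \<longrightarrow> norm (norm (f x - g x) powr p)
        \<le> norm (2 powr p * (B powr p + norm (g x) powr p))"
      using bound by (intro AE_I2) simp
  qed
qed

lemma nn_integral_grad_powr_le:
  fixes \<Omega> :: "'a::euclidean_space set"
  assumes tf: "test_fun \<Omega> \<phi>" and \<Omega>[measurable]: "\<Omega> \<in> sets lebesgue" and p: "p > 0"
    and Du[measurable]: "Du \<in> borel_measurable lebesgue"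
    and Du_int: "set_integrable lebesgue \<Omega> (\<lambda>x. norm (Du x) powr p)"
    and diff_int: "set_integrable lebesgue \<Omega> (\<lambda>x. norm (grad \<phi> x - Du x) powr p)"
  shows "(\<integral>\<^sup>+z. ennreal (norm (grad \<phi> z) powr p) \<partial>lborel)
    \<le> ennreal (2 powr p * ((LINT x:\<Omega>|lebesgue. norm (Du x) powr p)
                          + (LINT x:\<Omega>|lebesgue. norm (grad \<phi> x - Du x) powr p)))"
proof -
  let ?h = "\<lambda>z. 2 powr p * (norm (Du z) powr p + norm (grad \<phi> z - Du z) powr p)"
  have h_int: "set_integrable lebesgue \<Omega> ?h"
    using Du_int diff_int by (intro set_integrable_mult_right set_integral_add(1))
  have "(\<integral>\<^sup>+z. ennreal (norm (grad \<phi> z) powr p) \<partial>lborel)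
      = (\<integral>\<^sup>+z. ennreal (norm (grad \<phi> z) powr p) \<partial>lebesgue)"
    by (rule nn_integral_completion[symmetric])
  also have "\<dots> \<le> (\<integral>\<^sup>+z. ennreal (indicator \<Omega> z *\<^sub>R ?h z) \<partial>lebesgue)"
  proof (rule nn_integral_mono)
    fix z
    show "ennreal (norm (grad \<phi> z) powr p) \<le> ennreal (indicator \<Omega> z *\<^sub>R ?h z)"
    proof (cases "z \<in> \<Omega>")
      case True
      have "norm (grad \<phi> z) \<le> norm (Du z) + norm (grad \<phi> z - Du z)"
        using norm_triangle_ineq[of "Du z" "grad \<phi> z - Du z"] by simp
      then have "norm (grad \<phi> z) powr p \<le> (norm (Du z) + norm (grad \<phi> z - Du z)) powr p"
        using p by (intro powr_mono2) auto
      also have "\<dots> \<le> ?h z" using p by (intro powr_add_le_two_powr) auto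
      finally show ?thesis using True by (intro ennreal_leI) simp
    next
      case False
      then show ?thesis using test_fun_eq_0_outside(2)[OF tf False] by simp
    qed
  qed
  also have "\<dots> = ennreal (LINT z:\<Omega>|lebesgue. ?h z)"
    using h_int unfolding set_lebesgue_integral_def set_integrable_def
    by (intro nn_integral_eq_integral) (auto simp: indicator_def)
  also have "(LINT z:\<Omega>|lebesgue. ?h z) = 2 powr p * ((LINT x:\<Omega>|lebesgue. norm (Du x) powr p)
                          + (LINT x:\<Omega>|lebesgue. norm (grad \<phi> x - Du x) powr p))"
    using Du_int diff_int by simp
  finally show ?thesis .
qed

lemma W01p_approx_AE:
  fixes \<Omega> :: "'a::euclidean_space set"
  assumes W: "W01p \<Omega> p u Du" and \<Omega>: "\<Omega> \<in> lmeasurable" and p: "p > 0"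
  obtains \<phi> where "\<And>n. test_fun \<Omega> (\<phi> n)"
    "AE x in lebesgue. x \<in> \<Omega> \<longrightarrow> (\<lambda>n. \<phi> n x) \<longlonglongrightarrow> u x"
    "(\<lambda>n. LINT x:\<Omega>|lebesgue. norm (grad (\<phi> n) x - Du x) powr p) \<longlonglongrightarrow> 0"
proof -
  from W obtain \<psi> where tf: "\<And>k. test_fun \<Omega> (\<psi> k)"
    and val: "(\<lambda>k. LINT x:\<Omega>|lebesgue. \<bar>\<psi> k x - u x\<bar> powr p) \<longlonglongrightarrow> 0"
    and grad: "(\<lambda>k. LINT x:\<Omega>|lebesgue. norm (grad (\<psi> k) x - Du x) powr p) \<longlonglongrightarrow> 0"
    and u[measurable]: "u \<in> borel_measurable lebesgue"
    and u_int: "set_integrable lebesgue \<Omega> (\<lambda>x. \<bar>u x\<bar> powr p)"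
    unfolding W01p_def by blast
  have [measurable]: "\<Omega> \<in> sets lebesgue" using \<Omega> by (rule fmeasurableD)
  define w where "w n x = indicator \<Omega> x *\<^sub>R (\<bar>\<psi> n x - u x\<bar> powr p)" for n x
  have "set_integrable lebesgue \<Omega> (\<lambda>x. norm (\<psi> n x - u x) powr p)" for n
    using \<Omega> borel_measurable_continuous_onI[OF continuous_on_test_fun[OF tf]] bounded_range_test_fun[OF tf]
      u u_int p
    by (intro set_integrable_norm_diff_powr) (auto simp: measurable_completion)
  then have w_int: "integrable lebesgue (w n)" for n
    unfolding set_integrable_def w_def by simp
  have "(\<integral>x. norm (w n x) \<partial>lebesgue) = (LINT x:\<Omega>|lebesgue. \<bar>\<psi> n x - u x\<bar> powr p)" for n
    unfolding set_lebesgue_integral_def w_def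
    by (rule Bochner_Integration.integral_cong) (auto simp: indicator_def)
  then have "(\<lambda>n. \<integral>x. norm (w n x) \<partial>lebesgue) \<longlonglongrightarrow> 0" using val by simp
  then obtain r where r: "strict_mono r" "AE x in lebesgue. (\<lambda>n. w (r n) x) \<longlonglongrightarrow> 0"
    using tendsto_L1_AE_subseq[where u = w, OF w_int] by blast
  show ?thesis
  proof (rule that[of "\<lambda>n. \<psi> (r n)"])
    show "test_fun \<Omega> (\<psi> (r n))" for n by (rule tf)
    show "(\<lambda>n. LINT x:\<Omega>|lebesgue. norm (grad (\<psi> (r n)) x - Du x) powr p) \<longlonglongrightarrow> 0"
      using LIMSEQ_subseq_LIMSEQ[OF grad r(1)] by (simp add: o_def)
    show "AE x in lebesgue. x \<in> \<Omega> \<longrightarrow> (\<lambda>n. \<psi> (r n) x) \<longlonglongrightarrow> u x"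
      using r(2)
    proof eventually_elim
      case (elim x)
      show ?case
      proof
        assume "x \<in> \<Omega>"
        then have "(\<lambda>n. \<bar>\<psi> (r n) x - u x\<bar> powr p) \<longlonglongrightarrow> 0" using elim by (simp add: w_def)
        then have "(\<lambda>n. (\<bar>\<psi> (r n) x - u x\<bar> powr p) powr (1 / p)) \<longlonglongrightarrow> 0"
          by (rule tendsto_zero_powrI[OF _ tendsto_const]) (use p in auto)
        then have "(\<lambda>n. \<bar>\<psi> (r n) x - u x\<bar>) \<longlonglongrightarrow> 0"
          using p by (simp add: powr_powr)
        then show "(\<lambda>n. \<psi> (r n) x) \<longlonglongrightarrow> u x"
          by (simp add: LIM_zero_iff tendsto_rabs_zero_iff)
      qed
    qed
  qed
qed

lemma abs_test_fun_le_morrey_approx: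
  fixes \<Omega> A :: "'a::euclidean_space set"
  assumes tf: "test_fun \<Omega> \<phi>" and \<Omega>: "\<Omega> \<in> lmeasurable" and pN: "real DIM('a) < p"
    and A: "A \<in> sets lborel" "emeasure lborel A = ennreal mA" "mA > 0" "A \<inter> \<Omega> = {}"
    and D: "\<And>y. y \<in> A \<Longrightarrow> norm (y - x) \<le> D"
    and Du[measurable]: "Du \<in> borel_measurable lebesgue"
    and Du_int: "set_integrable lebesgue \<Omega> (\<lambda>x. norm (Du x) powr p)" and \<mu>: "\<mu> > 0"
  shows "\<bar>\<phi> x\<bar> \<le> D / (1 - real DIM('a) / p) * (\<mu> powr (1 - p)
    * (2 powr p * ((LINT x:\<Omega>|lebesgue. norm (Du x) powr p)
                  + (LINT x:\<Omega>|lebesgue. norm (grad \<phi> x - Du x) powr p))) / mA + \<mu>)"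
proof -
  have p: "p > 0" using pN of_nat_0_le_iff[of "DIM('a)"] by linarith
  have diff_int: "set_integrable lebesgue \<Omega> (\<lambda>x. norm (grad \<phi> x - Du x) powr p)"
    using \<Omega> borel_measurable_continuous_onI[OF continuous_on_grad[OF tf]] bounded_range_grad[OF tf]
      Du_int p
    by (intro set_integrable_norm_diff_powr) (auto simp: measurable_completion)
  show ?thesis
  proof (rule abs_test_fun_le_morrey[OF tf pN A(1-3) _ D
        nn_integral_grad_powr_le[OF tf fmeasurableD[OF \<Omega>] p Du Du_int diff_int] _ \<mu>])
    show "\<phi> y = 0" if "y \<in> A" for y
      using that A(4) by (intro test_fun_eq_0_outside(1)[OF tf]) auto
    show "0 \<le> 2 powr p * ((LINT x:\<Omega>|lebesgue. norm (Du x) powr p)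
        + (LINT x:\<Omega>|lebesgue. norm (grad \<phi> x - Du x) powr p))"
      by (simp add: set_integral_nonneg)
  qed
qed

lemma W01p_AE_abs_le_morrey:
  fixes \<Omega> A :: "'a::euclidean_space set"
  assumes W: "W01p \<Omega> p u Du" and \<Omega>: "\<Omega> \<in> lmeasurable" and pN: "real DIM('a) < p"
    and A: "A \<in> sets lborel" "emeasure lborel A = ennreal mA" "mA > 0" "A \<inter> \<Omega> = {}"
    and D: "\<And>x y. x \<in> \<Omega> \<Longrightarrow> y \<in> A \<Longrightarrow> norm (y - x) \<le> D"
  shows "AE x in lebesgue. x \<in> \<Omega> \<longrightarrow> \<bar>u x\<bar> \<le> D / (1 - real DIM('a) / p) * (2 powr p / mA + 1)
           * ((LINT x:\<Omega>|lebesgue. norm (Du x) powr p) + 1) powr (1 / p)"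
proof -
  define K where "K = D / (1 - real DIM('a) / p)"
  define X where "X = (LINT x:\<Omega>|lebesgue. norm (Du x) powr p)"
  define \<mu> where "\<mu> = (X + 1) powr (1 / p)"
    \<comment> \<open>balances the two terms of the pointwise bound, since \<mu>^(1-p) X \<le> \<mu>\<close>
  have "real DIM('a) \<ge> 1" using DIM_positive[where 'a='a] by linarith
  with pN have p: "p > 1" by linarith
  have X0: "X \<ge> 0" unfolding X_def by (simp add: set_integral_nonneg)
  have \<mu>: "\<mu> > 0" and \<mu>p: "\<mu> powr p = X + 1"
    unfolding \<mu>_def using X0 p by (simp_all add: powr_powr)
  from W have Du[measurable]: "Du \<in> borel_measurable lebesgue"
    and Du_int: "set_integrable lebesgue \<Omega> (\<lambda>x. norm (Du x) powr p)"
    unfolding W01p_def by auto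
  obtain \<phi> where tf: "\<And>n. test_fun \<Omega> (\<phi> n)"
    and conv: "AE x in lebesgue. x \<in> \<Omega> \<longrightarrow> (\<lambda>n. \<phi> n x) \<longlonglongrightarrow> u x"
    and grad_conv: "(\<lambda>n. LINT x:\<Omega>|lebesgue. norm (grad (\<phi> n) x - Du x) powr p) \<longlonglongrightarrow> 0"
    using W01p_approx_AE[OF W \<Omega>] p by auto
  define L where "L n = (LINT x:\<Omega>|lebesgue. norm (grad (\<phi> n) x - Du x) powr p)" for n
  have approx_bound: "\<bar>\<phi> n x\<bar> \<le> K * (\<mu> powr (1 - p) * (2 powr p * (X + L n)) / mA + \<mu>)"
    if "x \<in> \<Omega>" for n x
    unfolding K_def X_def L_def
    by (rule abs_test_fun_le_morrey_approx[OF tf \<Omega> pN A D[OF that] Du Du_int \<mu>])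
  show ?thesis
    using conv
  proof eventually_elim
    case (elim x)
    show ?case
    proof
      assume x: "x \<in> \<Omega>"
      obtain y where "y \<in> A" using A(2,3) by fastforce
      then have "D \<ge> 0" using D[OF x] norm_ge_zero order_trans by blast
      then have K0: "K \<ge> 0" unfolding K_def using pN p by (simp add: field_simps)
      have "(\<lambda>n. \<bar>\<phi> n x\<bar>) \<longlonglongrightarrow> \<bar>u x\<bar>" using elim x by (intro tendsto_rabs) simp
      moreover have "(\<lambda>n. K * (\<mu> powr (1 - p) * (2 powr p * (X + L n)) / mA + \<mu>))
          \<longlonglongrightarrow> K * (\<mu> powr (1 - p) * (2 powr p * (X + 0)) / mA + \<mu>)"
        using grad_conv A(3) unfolding L_def[symmetric] by (intro tendsto_intros) auto
      ultimately have "\<bar>u x\<bar> \<le> K * (\<mu> powr (1 - p) * (2 powr p * (X + 0)) / mA + \<mu>)"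
        by (rule LIMSEQ_le) (use approx_bound x in auto)
      also have "\<dots> \<le> K * (2 powr p / mA + 1) * \<mu>"
      proof -
        have "\<mu> powr (1 - p) * X \<le> \<mu> powr (1 - p) * \<mu> powr p"
          using \<mu>p by (intro mult_left_mono) auto
        also have "\<dots> = \<mu>" using \<mu> by (simp flip: powr_add)
        finally have "\<mu> powr (1 - p) * (2 powr p * (X + 0)) / mA \<le> 2 powr p / mA * \<mu>"
          using A(3) by (simp add: field_simps mult_left_mono)
        then have "K * (\<mu> powr (1 - p) * (2 powr p * (X + 0)) / mA + \<mu>) \<le> K * (2 powr p / mA * \<mu> + \<mu>)"
          by (rule mult_left_mono[OF add_right_mono K0])
        then show ?thesis by (simp add: algebra_simps)
      qed
      finally show "\<bar>u x\<bar> \<le> D / (1 - real DIM('a) / p) * (2 powr p / mA + 1)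
          * ((LINT x:\<Omega>|lebesgue. norm (Du x) powr p) + 1) powr (1 / p)"
        unfolding K_def \<mu>_def X_def .
    qed
  qed
qed

lemma W01p_morrey_bound:
  fixes \<Omega> :: "'a::euclidean_space set"
  assumes "open \<Omega>" "bounded \<Omega>" "real DIM('a) < p"
  obtains K where "K > 0" "\<And>u Du. W01p \<Omega> p u Du \<Longrightarrow>
    AE x in lebesgue. x \<in> \<Omega> \<longrightarrow> \<bar>u x\<bar> \<le> K * ((LINT x:\<Omega>|lebesgue. norm (Du x) powr p) + 1) powr (1 / p)"
proof -
  obtain \<rho> where \<rho>: "\<rho> > 0" "\<Omega> \<subseteq> ball 0 \<rho>"
    using bounded_subset_ballD[OF assms(2), of 0] by blast
  obtain e :: 'a where e: "e \<in> Basis" using nonempty_Basis by blast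
  define A where "A = ball ((\<rho> + 1) *\<^sub>R e) 1"
  define mA where "mA = measure lborel A"
  have "emeasure lborel A \<noteq> \<infinity>"
    unfolding A_def using emeasure_lborel_ball_finite by (simp add: less_top)
  then have mA: "mA > 0" "emeasure lborel A = ennreal mA"
    unfolding mA_def by (auto simp: A_def content_ball_pos intro: emeasure_eq_ennreal_measure)
  have norm_A: "\<rho> < norm y \<and> norm y < \<rho> + 2" if "y \<in> A" for y
  proof -
    have "norm ((\<rho> + 1) *\<^sub>R e) = \<rho> + 1" using e \<rho> by simp
    moreover have "norm (y - (\<rho> + 1) *\<^sub>R e) < 1"
      using that by (simp add: A_def dist_norm norm_minus_commute)
    ultimately show ?thesis
      using norm_triangle_sub[of "(\<rho> + 1) *\<^sub>R e" y] norm_triangle_sub[of y "(\<rho> + 1) *\<^sub>R e"]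
        norm_minus_commute[of y "(\<rho> + 1) *\<^sub>R e"] by linarith
  qed
  have disjoint: "A \<inter> \<Omega> = {}" using \<rho>(2) norm_A by fastforce
  have diam: "norm (y - x) \<le> 2 * \<rho> + 2" if "x \<in> \<Omega>" "y \<in> A" for x y
    using norm_A[OF that(2)] \<rho>(2) that(1) norm_triangle_ineq4[of y x] by fastforce
  have "real DIM('a) \<ge> 1" using DIM_positive[where 'a='a] by linarith
  with assms(3) have "real DIM('a) / p < 1" by (simp add: pos_divide_less_eq)
  then have "(2 * \<rho> + 2) / (1 - real DIM('a) / p) * (2 powr p / mA + 1) > 0"
    using \<rho>(1) mA(1) by (intro mult_pos_pos divide_pos_pos add_nonneg_pos) auto
  then show ?thesis
    using W01p_AE_abs_le_morrey[OF _ lmeasurable_open[OF assms(2,1)] assms(3) _ mA(2,1) disjoint diam]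
    by (intro that) (auto simp: A_def)
qed

section \<open>Energy estimate\<close>

lemma norm_powr_mult_inner_self:
  fixes v :: "'a::real_inner"
  shows "norm v powr (s - 2) * (v \<bullet> v) = norm v powr s"
proof (cases "v = 0")
  case False
  then have "v \<bullet> v = norm v powr 2"
    by (simp add: power2_norm_eq_inner[symmetric] powr_realpow)
  then show ?thesis by (simp only: powr_add[symmetric] diff_add_cancel)
qed simp

text \<open>f need not be integrable: otherwise its integral is 0, which the nonnegative bound dominates.\<close>

lemma set_integral_le_nonneg_bound:
  fixes f g :: "'a \<Rightarrow> real"
  assumes "set_integrable M A g" "AE x in M. x \<in> A \<longrightarrow> f x \<le> g x" "AE x in M. x \<in> A \<longrightarrow> 0 \<le> g x"
  shows "(LINT x:A|M. f x) \<le> (LINT x:A|M. g x)"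
  using assms unfolding set_lebesgue_integral_def set_integrable_def
  by (intro integral_mono_AE') (auto elim!: eventually_mono simp: indicator_def)

lemma set_integral_comp_mult_ge:
  fixes g :: "real \<Rightarrow> real" and u w :: "'a \<Rightarrow> real"
  assumes A[measurable]: "A \<in> sets M"
    and g: "continuous_on UNIV g" "\<And>s. g s \<ge> a0"
    and u[measurable]: "u \<in> borel_measurable M" and u_bdd: "AE x in M. x \<in> A \<longrightarrow> \<bar>u x\<bar> \<le> R"
    and w[measurable]: "w \<in> borel_measurable M" and w_int: "set_integrable M A w" and w0: "\<And>x. w x \<ge> 0"
  shows "a0 * (LINT x:A|M. w x) \<le> (LINT x:A|M. g (u x) * w x)"
proof -
  have [measurable]: "g \<in> borel_measurable borel"
    by (rule borel_measurable_continuous_onI[OF g(1)])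
  have "compact (g ` {-R..R})"
    by (rule compact_continuous_image[OF continuous_on_subset[OF g(1)]]) auto
  then obtain G where G: "\<And>s. s \<in> {-R..R} \<Longrightarrow> \<bar>g s\<bar> \<le> G"
    by (metis compact_imp_bounded bounded_iff image_eqI real_norm_def)
  have "set_integrable M A (\<lambda>x. g (u x) * w x)"
  proof (rule set_integrable_bound[where f="\<lambda>x. G * w x"])
    show "set_integrable M A (\<lambda>x. G * w x)" using w_int by simp
    show "set_borel_measurable M A (\<lambda>x. g (u x) * w x)"
      unfolding set_borel_measurable_def by measurable
    show "AE x in M. x \<in> A \<longrightarrow> norm (g (u x) * w x) \<le> norm (G * w x)"
      using u_bdd
    proof eventually_elim
      case (elim x)
      show ?case
      proof
        assume "x \<in> A"
        then have "\<bar>g (u x)\<bar> \<le> G" using elim by (intro G) (simp add: abs_le_iff)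
        then show "norm (g (u x) * w x) \<le> norm (G * w x)"
          using w0[of x] by (simp add: abs_mult mult_right_mono)
      qed
    qed
  qed
  then have "(LINT x:A|M. a0 * w x) \<le> (LINT x:A|M. g (u x) * w x)"
    using w_int g(2) w0 by (intro set_integral_mono) (auto intro: mult_right_mono)
  then show ?thesis by simp
qed

lemma weak_solution_energy_le:
  fixes \<Omega> :: "'a::euclidean_space set"
  assumes ws: "weak_solution \<Omega> p q g f u Du" and \<Omega>: "\<Omega> \<in> lmeasurable"
    and pq: "0 < q" "q < p" and g: "continuous_on UNIV g" "\<And>s. g s \<ge> a0"
    and c: "c0 \<ge> 0" "c1 \<ge> 0" "\<alpha> \<ge> 0"
    and H3: "AE x in lebesgue. x \<in> \<Omega> \<longrightarrow>
        (\<forall>s \<xi>. f x s \<xi> * s \<le> c0 * norm \<xi> powr p + c1 * (\<bar>s\<bar> powr \<alpha> + 1))"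
    and u_bdd: "AE x in lebesgue. x \<in> \<Omega> \<longrightarrow> \<bar>u x\<bar> \<le> M" and \<delta>: "\<delta> > 0"
  shows "(a0 - c0 - \<delta>) * (LINT x:\<Omega>|lebesgue. norm (Du x) powr p)
    \<le> (\<delta> powr (- q / (p - q)) + c1 * (M powr \<alpha> + 1)) * measure lebesgue \<Omega>"
proof -
  define X where "X = (LINT x:\<Omega>|lebesgue. norm (Du x) powr p)"
  define m where "m = measure lebesgue \<Omega>"
  define C where "C = \<delta> powr (- q / (p - q))"
  have [measurable]: "\<Omega> \<in> sets lebesgue" using \<Omega> by (rule fmeasurableD)
  have W: "W01p \<Omega> p u Du" using ws unfolding weak_solution_def by blast
  then have [measurable]: "u \<in> borel_measurable lebesgue" "Du \<in> borel_measurable lebesgue"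
    and Du_int: "set_integrable lebesgue \<Omega> (\<lambda>x. norm (Du x) powr p)"
    unfolding W01p_def by auto
  have tested: "(LINT x:\<Omega>|lebesgue. g (u x) * norm (Du x) powr p)
      - (LINT x:\<Omega>|lebesgue. norm (Du x) powr q) = (LINT x:\<Omega>|lebesgue. f x (u x) (Du x) * u x)"
  proof -
    have "(LINT x:\<Omega>|lebesgue. g (u x) * norm (Du x) powr (p - 2) * (Du x \<bullet> Du x))
        - (LINT x:\<Omega>|lebesgue. norm (Du x) powr (q - 2) * (Du x \<bullet> Du x))
        = (LINT x:\<Omega>|lebesgue. f x (u x) (Du x) * u x)"
      using ws W unfolding weak_solution_def by blast
    then show ?thesis by (simp add: mult.assoc norm_powr_mult_inner_self)
  qed
  have const_int: "(LINT x:\<Omega>|lebesgue. c) = c * m" for c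
    unfolding m_def using \<Omega> by (simp add: fmeasurable_def set_integral_const less_top)
  have bound_int: "set_integrable lebesgue \<Omega> (\<lambda>x. a * norm (Du x) powr p + b)" for a b
    using Du_int set_integrable_const_real[OF \<Omega>] by (intro set_integral_add(1)) auto
  have "a0 * X \<le> (LINT x:\<Omega>|lebesgue. g (u x) * norm (Du x) powr p)"
    unfolding X_def using Du_int g u_bdd by (intro set_integral_comp_mult_ge) auto
  moreover have "(LINT x:\<Omega>|lebesgue. norm (Du x) powr q) \<le> \<delta> * X + C * m"
  proof -
    have "(LINT x:\<Omega>|lebesgue. norm (Du x) powr q) \<le> (LINT x:\<Omega>|lebesgue. \<delta> * norm (Du x) powr p + C)"
      using bound_int powr_le_eps_mult_powr[OF pq(1,2) \<delta>] \<delta>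
      by (intro set_integral_le_nonneg_bound) (auto simp: C_def)
    then show ?thesis unfolding X_def using Du_int set_integrable_const_real[OF \<Omega>] by (simp add: const_int)
  qed
  moreover have "(LINT x:\<Omega>|lebesgue. f x (u x) (Du x) * u x) \<le> c0 * X + c1 * (M powr \<alpha> + 1) * m"
  proof -
    have "(LINT x:\<Omega>|lebesgue. f x (u x) (Du x) * u x)
        \<le> (LINT x:\<Omega>|lebesgue. c0 * norm (Du x) powr p + c1 * (M powr \<alpha> + 1))"
    proof (rule set_integral_le_nonneg_bound[OF bound_int])
      show "AE x in lebesgue. x \<in> \<Omega> \<longrightarrow> f x (u x) (Du x) * u x \<le> c0 * norm (Du x) powr p + c1 * (M powr \<alpha> + 1)"
        using H3 u_bdd
      proof eventually_elim
        case (elim x)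
        show ?case
        proof
          assume x: "x \<in> \<Omega>"
          have "\<bar>u x\<bar> powr \<alpha> \<le> M powr \<alpha>" using elim x c(3) by (intro powr_mono2) auto
          then have "c1 * (\<bar>u x\<bar> powr \<alpha> + 1) \<le> c1 * (M powr \<alpha> + 1)" using c(2) by (simp add: mult_left_mono)
          then show "f x (u x) (Du x) * u x \<le> c0 * norm (Du x) powr p + c1 * (M powr \<alpha> + 1)"
            using elim x by (smt (verit))
        qed
      qed
      show "AE x in lebesgue. x \<in> \<Omega> \<longrightarrow> 0 \<le> c0 * norm (Du x) powr p + c1 * (M powr \<alpha> + 1)"
        using c by (intro AE_I2) simp
    qed
    then show ?thesis unfolding X_def using Du_int set_integrable_const_real[OF \<Omega>] by (simp add: const_int mult_ac)
  qed
  ultimately show ?thesis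
    using tested unfolding X_def[symmetric] m_def[symmetric] C_def[symmetric] by (simp add: algebra_simps)
qed

lemma sign_condition_mono:
  assumes "AE x in M. x \<in> \<Omega> \<longrightarrow>
      (\<forall>s \<xi>. f x s \<xi> * s \<le> c0 * norm \<xi> powr p + c1 * (\<bar>s\<bar> powr \<alpha> + 1))"
    and "c0 \<le> c0'"
  shows "AE x in M. x \<in> \<Omega> \<longrightarrow>
      (\<forall>s \<xi>. f x s \<xi> * s \<le> c0' * norm \<xi> powr p + c1 * (\<bar>s\<bar> powr \<alpha> + 1))"
  using assms(1)
proof eventually_elim
  case (elim x)
  show ?case
  proof (intro impI allI)
    fix s \<xi> assume "x \<in> \<Omega>"
    then have "f x s \<xi> * s \<le> c0 * norm \<xi> powr p + c1 * (\<bar>s\<bar> powr \<alpha> + 1)" using elim by blast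
    moreover have "c0 * norm \<xi> powr p \<le> c0' * norm \<xi> powr p"
      using assms(2) by (intro mult_right_mono) auto
    ultimately show "f x s \<xi> * s \<le> c0' * norm \<xi> powr p + c1 * (\<bar>s\<bar> powr \<alpha> + 1)" by linarith
  qed
qed

lemma weak_solution_gradient_bound:
  fixes \<Omega> :: "'a::euclidean_space set"
  assumes \<Omega>: "\<Omega> \<in> lmeasurable" and pq: "0 < q" "q < p"
    and g: "continuous_on UNIV g" "\<And>s. g s \<ge> a0" and a0: "a0 > 0"
    and c: "c0 < a0" "c1 \<ge> 0" "0 < \<alpha>" "\<alpha> < p"
    and H3: "AE x in lebesgue. x \<in> \<Omega> \<longrightarrow>
        (\<forall>s \<xi>. f x s \<xi> * s \<le> c0 * norm \<xi> powr p + c1 * (\<bar>s\<bar> powr \<alpha> + 1))"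
    and morrey: "\<And>u Du. W01p \<Omega> p u Du \<Longrightarrow> AE x in lebesgue. x \<in> \<Omega> \<longrightarrow>
        \<bar>u x\<bar> \<le> K * ((LINT x:\<Omega>|lebesgue. norm (Du x) powr p) + 1) powr (1 / p)"
    and K: "K \<ge> 0"
  obtains T where "T > 0"
    "\<And>u Du. weak_solution \<Omega> p q g f u Du \<Longrightarrow> (LINT x:\<Omega>|lebesgue. norm (Du x) powr p) \<le> T"
proof -
  define c0' where "c0' = max c0 0"
  have H3': "AE x in lebesgue. x \<in> \<Omega> \<longrightarrow>
      (\<forall>s \<xi>. f x s \<xi> * s \<le> c0' * norm \<xi> powr p + c1 * (\<bar>s\<bar> powr \<alpha> + 1))"
    using H3 by (rule sign_condition_mono) (simp add: c0'_def)
  have c0': "c0' \<ge> 0" and \<alpha>: "\<alpha> \<ge> 0" using c(3) by (simp_all add: c0'_def)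
  define \<delta> where "\<delta> = (a0 - c0') / 2"
  define m where "m = measure lebesgue \<Omega>"
  define B0 where "B0 = (\<delta> powr (- q / (p - q)) + c1) * m + \<delta>"
  define B1 where "B1 = c1 * K powr \<alpha> * m"
  have \<delta>: "\<delta> > 0" using c(1) a0 by (simp add: \<delta>_def c0'_def)
  have "B0 \<ge> 0" "B1 \<ge> 0" unfolding B0_def B1_def m_def using \<delta> c(2) by simp_all
  moreover have "0 < \<alpha> / p" "\<alpha> / p < 1" using c(3,4) by simp_all
  ultimately obtain T where T: "T > 0"
    and absorb: "\<And>t. t \<ge> 0 \<Longrightarrow> \<delta> * t \<le> B0 + B1 * t powr (\<alpha> / p) \<Longrightarrow> t \<le> T"
    using bounded_of_sublinear_growth[OF \<delta>] by blast
  show ?thesis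
  proof (rule that[OF T])
    fix u Du assume ws: "weak_solution \<Omega> p q g f u Du"
    define X where "X = (LINT x:\<Omega>|lebesgue. norm (Du x) powr p)"
    define M where "M = K * (X + 1) powr (1 / p)"
    have X0: "X \<ge> 0" unfolding X_def by (simp add: set_integral_nonneg)
    have u_bdd: "AE x in lebesgue. x \<in> \<Omega> \<longrightarrow> \<bar>u x\<bar> \<le> M"
      using morrey ws unfolding weak_solution_def M_def X_def by blast
    have "(a0 - c0' - \<delta>) * X \<le> (\<delta> powr (- q / (p - q)) + c1 * (M powr \<alpha> + 1)) * m"
      unfolding X_def m_def by (rule weak_solution_energy_le[OF ws \<Omega> pq g c0' c(2) \<alpha> H3' u_bdd \<delta>])
    moreover have "a0 - c0' - \<delta> = \<delta>" unfolding \<delta>_def by (simp add: field_simps)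
    moreover have "M powr \<alpha> = K powr \<alpha> * (X + 1) powr (\<alpha> / p)"
      unfolding M_def using K X0 by (simp add: powr_mult powr_powr)
    then have "(\<delta> powr (- q / (p - q)) + c1 * (M powr \<alpha> + 1)) * m
        = B0 - \<delta> + B1 * (X + 1) powr (\<alpha> / p)"
      unfolding B0_def B1_def by (simp add: algebra_simps)
    ultimately have "\<delta> * (X + 1) \<le> B0 + B1 * (X + 1) powr (\<alpha> / p)"
      by (simp add: algebra_simps)
    then show "X \<le> T" using absorb[of "X + 1"] X0 by simp
  qed
qed

theorem mainTheorem3:
  fixes \<Omega> :: "'a::euclidean_space set"
    and p q a0 b c r1 r2 c0 c1 \<alpha> :: real
    and g :: "real \<Rightarrow> real"
    and f :: "'a \<Rightarrow> real \<Rightarrow> 'a \<Rightarrow> real"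
    and \<sigma> :: "'a \<Rightarrow> real"
  assumes dom: "bounded_lipschitz_domain \<Omega>"
    and pq: "1 < q" "q < p" "real DIM('a) < p"
    and H1: "continuous_on UNIV g" "a0 > 0" "\<And>s. g s \<ge> a0"
    and H2_car: "caratheodory \<Omega> f"
    and H2_sigma: "\<sigma> \<in> borel_measurable lebesgue" "\<And>x. \<sigma> x \<ge> 0"
        "set_integrable lebesgue \<Omega> (\<lambda>x. \<bar>\<sigma> x\<bar> powr r1)"
    and H2_const: "b \<ge> 0" "c \<ge> 0" "r1 \<ge> 1" "r2 \<ge> 1"
    and H2: "AE x in lebesgue. x \<in> \<Omega> \<longrightarrow>
        (\<forall>s \<xi>. \<bar>f x s \<xi>\<bar> \<le> \<sigma> x + b * \<bar>s\<bar> powr r2 + c * norm \<xi> powr (p - 1))"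
    and H3_const: "c0 < a0" "c1 > 0" "1 \<le> \<alpha>" "\<alpha> < p"
    and H3: "AE x in lebesgue. x \<in> \<Omega> \<longrightarrow>
        (\<forall>s \<xi>. f x s \<xi> * s \<le> c0 * norm \<xi> powr p + c1 * (\<bar>s\<bar> powr \<alpha> + 1))"
  shows "\<exists>R>0. \<exists>R1>0. \<forall>u Du. weak_solution \<Omega> p q g f u Du \<longrightarrow>
           W01p_norm \<Omega> p Du \<le> R1 \<and> (AE x in lebesgue. x \<in> \<Omega> \<longrightarrow> \<bar>u x\<bar> \<le> R)"
proof -
  \<comment> \<open>(H2) only makes the weak formulation meaningful, and Morrey's inequality in W_0^{1,p}
    needs no boundary regularity: neither enters the estimate.\<close>
  have \<Omega>: "open \<Omega>" "bounded \<Omega>" using dom unfolding bounded_lipschitz_domain_def by auto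
  obtain K where K: "K > 0" and morrey: "\<And>u Du. W01p \<Omega> p u Du \<Longrightarrow> AE x in lebesgue. x \<in> \<Omega> \<longrightarrow>
      \<bar>u x\<bar> \<le> K * ((LINT x:\<Omega>|lebesgue. norm (Du x) powr p) + 1) powr (1 / p)"
    using W01p_morrey_bound[OF \<Omega> pq(3)] by blast
  have "0 < q" "c1 \<ge> 0" "0 < \<alpha>" "K \<ge> 0" using pq(1) H3_const(2,3) K by simp_all
  then obtain T where T: "T > 0" and energy: "\<And>u Du. weak_solution \<Omega> p q g f u Du \<Longrightarrow>
      (LINT x:\<Omega>|lebesgue. norm (Du x) powr p) \<le> T"
    using weak_solution_gradient_bound[OF lmeasurable_open[OF \<Omega>(2,1)] _ pq(2) H1(1,3,2) H3_const(1) _ _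
        H3_const(4) H3 morrey] by blast
  have "\<forall>u Du. weak_solution \<Omega> p q g f u Du \<longrightarrow> W01p_norm \<Omega> p Du \<le> T powr (1 / p)
      \<and> (AE x in lebesgue. x \<in> \<Omega> \<longrightarrow> \<bar>u x\<bar> \<le> K * (T + 1) powr (1 / p))"
  proof (intro allI impI conjI)
    fix u Du assume ws: "weak_solution \<Omega> p q g f u Du"
    have X0: "(LINT x:\<Omega>|lebesgue. norm (Du x) powr p) \<ge> 0" by (simp add: set_integral_nonneg)
    have p: "p > 0" using pq by linarith
    show "W01p_norm \<Omega> p Du \<le> T powr (1 / p)"
      unfolding W01p_norm_def using energy[OF ws] X0 p by (intro powr_mono2) auto
    have "K * ((LINT x:\<Omega>|lebesgue. norm (Du x) powr p) + 1) powr (1 / p) \<le> K * (T + 1) powr (1 / p)"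
      using energy[OF ws] X0 p K by (intro mult_left_mono powr_mono2) auto
    moreover have "AE x in lebesgue. x \<in> \<Omega> \<longrightarrow>
        \<bar>u x\<bar> \<le> K * ((LINT x:\<Omega>|lebesgue. norm (Du x) powr p) + 1) powr (1 / p)"
      using morrey ws unfolding weak_solution_def by blast
    ultimately show "AE x in lebesgue. x \<in> \<Omega> \<longrightarrow> \<bar>u x\<bar> \<le> K * (T + 1) powr (1 / p)"
      by (auto elim: eventually_mono)
  qed
  moreover have "K * (T + 1) powr (1 / p) > 0" "T powr (1 / p) > 0" using K T by simp_all
  ultimately show ?thesis by blast
qed

end
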